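(* Let $V$ be a finite set of units, $\Theta=(\theta(i,j))_{i,j\in V}$ with $\theta(i,j)>0$, $\mathcal{M}$ a finite set of valid redistricting maps of $V$ into $k$ districts, and $\mathcal{D}$ a distribution on $\mathcal{M}$ with population centroid $A_c(i,j)=\mathbb{E}_{A'\sim\mathcal{D}}[A'(i,j)]$. A population medoid is a map $A^*\in\arg\min_{A\in\mathcal{M}}\mathbb{E}_{A'\sim\mathcal{D}}[d_\Theta(A,A')]$. Then the population medoids are exactly the solutions of the constrained min $k$-cut problem \[\min_{A\in\mathcal{M}}\ \sum_{i,j\in V} s(i,j)\,B_A(i,j),\qquad s(i,j)=\tfrac{1}{2}\theta(i,j)\big(2A_c(i,j)-1\big),\] where $B_A(i,j)=1-A(i,j)$ equals $1$ iff $i$ and $j$ lie in different districts of the map $A$; that is, a population medoid can be obtained by solving this min $k$-cut problem whose feasible partitions are constrained to be valid redistricting maps.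
   Context: A redistricting map is a partition of $V$ (the vertex set of a graph modeling a state) into $k$ nonempty pairwise disjoint districts; valid maps satisfy a fixed set of constraints (e.g. contiguity, equal population, compactness). A map is identified with its adjacency matrix $A$, $A(i,j)=1$ iff $i,j$ are in the same district and $0$ otherwise. $d_\Theta(A_1,A_2)=\frac{1}{2}\sum_{i,j\in V}\theta(i,j)|A_1(i,j)-A_2(i,j)|$, summing over ordered pairs. *)

theory Defs
  imports "HOL-Probability.Probability"
begin

definition is_map :: "'a set \<Rightarrow> nat \<Rightarrow> 'a set set \<Rightarrow> bool" where
  "is_map V k P \<longleftrightarrow> partition_on V P \<and> card P = k"

definition adj :: "'a set set \<Rightarrow> 'a \<Rightarrow> 'a \<Rightarrow> real" where
  "adj P i j = (if \<exists>D\<in>P. i \<in> D \<and> j \<in> D then 1 else 0)"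

definition cutB :: "'a set set \<Rightarrow> 'a \<Rightarrow> 'a \<Rightarrow> real" where
  "cutB P i j = 1 - adj P i j"

definition dTheta :: "'a set \<Rightarrow> ('a \<Rightarrow> 'a \<Rightarrow> real) \<Rightarrow> 'a set set \<Rightarrow> 'a set set \<Rightarrow> real" where
  "dTheta V \<theta> P1 P2 = (1/2) * (\<Sum>i\<in>V. \<Sum>j\<in>V. \<theta> i j * \<bar>adj P1 i j - adj P2 i j\<bar>)"

definition centroid :: "'a set set pmf \<Rightarrow> 'a \<Rightarrow> 'a \<Rightarrow> real" where
  "centroid \<D> i j = measure_pmf.expectation \<D> (\<lambda>P'. adj P' i j)"

definition medoids :: "'a set \<Rightarrow> ('a \<Rightarrow> 'a \<Rightarrow> real) \<Rightarrow> 'a set set set \<Rightarrow> 'a set set pmf \<Rightarrow> 'a set set set" where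
  "medoids V \<theta> \<M> \<D> = {A \<in> \<M>. \<forall>B\<in>\<M>.
     measure_pmf.expectation \<D> (\<lambda>A'. dTheta V \<theta> A A') \<le> measure_pmf.expectation \<D> (\<lambda>A'. dTheta V \<theta> B A')}"

definition cut_obj :: "'a set \<Rightarrow> ('a \<Rightarrow> 'a \<Rightarrow> real) \<Rightarrow> 'a set set pmf \<Rightarrow> 'a set set \<Rightarrow> real" where
  "cut_obj V \<theta> \<D> A = (\<Sum>i\<in>V. \<Sum>j\<in>V. (1/2) * \<theta> i j * (2 * centroid \<D> i j - 1) * cutB A i j)"

definition min_cut_solutions :: "'a set \<Rightarrow> ('a \<Rightarrow> 'a \<Rightarrow> real) \<Rightarrow> 'a set set set \<Rightarrow> 'a set set pmf \<Rightarrow> 'a set set set" where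
  "min_cut_solutions V \<theta> \<M> \<D> = {A \<in> \<M>. \<forall>B\<in>\<M>. cut_obj V \<theta> \<D> A \<le> cut_obj V \<theta> \<D> B}"

end

theory Submission
  imports Defs
begin

text \<open>Since adjacency entries are 0 or 1, the expected distance from A to a random map is
  affine in the entries of A, with coefficients given by the centroid. Up to a constant not
  depending on A it is the min-cut objective, so both have the same minimisers over any
  family of maps.\<close>

lemma abs_adj_diff: "\<bar>adj A i j - adj B i j\<bar> = adj A i j * (1 - 2 * adj B i j) + adj B i j"
  by (simp add: adj_def)

lemma integrable_adj: "integrable (measure_pmf \<D>) (\<lambda>P. adj P i j)"
  by (rule measure_pmf.integrable_const_bound[where B = 1]) (auto simp: adj_def)

lemma expectation_dTheta:
  "measure_pmf.expectation \<D> (\<lambda>A'. dTheta V \<theta> A A') =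
    (1/2) * (\<Sum>i\<in>V. \<Sum>j\<in>V. \<theta> i j * (adj A i j * (1 - 2 * centroid \<D> i j) + centroid \<D> i j))"
  unfolding dTheta_def abs_adj_diff centroid_def
  by (simp add: integrable_adj Bochner_Integration.integral_sum algebra_simps)

lemma cut_obj_eq_expectation_dTheta:
  "cut_obj V \<theta> \<D> A = measure_pmf.expectation \<D> (\<lambda>A'. dTheta V \<theta> A A')
     - (1/2) * (\<Sum>i\<in>V. \<Sum>j\<in>V. \<theta> i j * (1 - centroid \<D> i j))"
  unfolding expectation_dTheta cut_obj_def cutB_def sum_distrib_left sum_subtractf[symmetric]
  by (intro sum.cong refl) (simp add: field_simps)

theorem theorem2:
  fixes V :: "'a set" and k :: nat and \<theta> :: "'a \<Rightarrow> 'a \<Rightarrow> real"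
    and \<M> :: "'a set set set" and \<D> :: "'a set set pmf"
  assumes "finite V"
    and "\<And>i j. i \<in> V \<Longrightarrow> j \<in> V \<Longrightarrow> \<theta> i j > 0"
    and "finite \<M>"
    and "\<And>A. A \<in> \<M> \<Longrightarrow> is_map V k A"
    and "set_pmf \<D> \<subseteq> \<M>"
  shows "medoids V \<theta> \<M> \<D> = min_cut_solutions V \<theta> \<M> \<D>"
  unfolding medoids_def min_cut_solutions_def cut_obj_eq_expectation_dTheta by simp

end
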